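(* An algebra $\langle M,+,\vee,\wedge,0,1,-1\rangle$ (arities $2,2,2,0,0,0$) is isomorphic to a subalgebra of the $\{+,\vee,\wedge,0,1,-1\}$-reduct of some unital commutative lattice-ordered group (with $1$ interpreted as the strong unit and $-1$ as its inverse) if and only if it is a cancellative unital commutative distributive $\ell$-monoid.
   Context: A \emph{unital commutative distributive $\ell$-monoid} is an algebra $\langle M,+,\vee,\wedge,0,1,-1\rangle$ such that: $\langle M,\vee,\wedge\rangle$ is a distributive lattice (with order $\le$); $\langle M,+,0\rangle$ is a commutative monoid; $+$ distributes over $\vee$ and $\wedge$; $-1+1=0$; $-1\le 0\le 1$; and for every $x\in M$ there is $n\in\mathbb{N}\setminus\{0\}$ with $(-1)+\dots+(-1)\le x\le 1+\dots+1$ ($n$ summands each). It is \emph{cancellative} if $x+z=y+z$ implies $x=y$. A unital commutative $\ell$-group is a commutative lattice-ordered group with a strong unit $u\ge 0$ (for every $g$ there is $n$ with $g\le nu$). *)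

theory Defs
  imports Main
begin

record 'a alg =
  car  :: "'a set"
  add  :: "'a \<Rightarrow> 'a \<Rightarrow> 'a"
  jn   :: "'a \<Rightarrow> 'a \<Rightarrow> 'a"
  mt   :: "'a \<Rightarrow> 'a \<Rightarrow> 'a"
  zr   :: "'a"
  one  :: "'a"
  mone :: "'a"

definition is_alg :: "('a, 'b) alg_scheme \<Rightarrow> bool" where
  "is_alg M \<longleftrightarrow>
     (\<forall>x\<in>car M. \<forall>y\<in>car M. add M x y \<in> car M \<and> jn M x y \<in> car M \<and> mt M x y \<in> car M)
     \<and> zr M \<in> car M \<and> one M \<in> car M \<and> mone M \<in> car M"

definition ale :: "('a, 'b) alg_scheme \<Rightarrow> 'a \<Rightarrow> 'a \<Rightarrow> bool" where
  "ale M x y \<longleftrightarrow> jn M x y = y"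

primrec nsum :: "('a, 'b) alg_scheme \<Rightarrow> nat \<Rightarrow> 'a \<Rightarrow> 'a" where
  "nsum M 0 x = zr M"
| "nsum M (Suc n) x = add M x (nsum M n x)"

definition distrib_lattice_on :: "('a, 'b) alg_scheme \<Rightarrow> bool" where
  "distrib_lattice_on M \<longleftrightarrow>
     (\<forall>x\<in>car M. \<forall>y\<in>car M. jn M x y = jn M y x \<and> mt M x y = mt M y x)
   \<and> (\<forall>x\<in>car M. \<forall>y\<in>car M. \<forall>z\<in>car M.
        jn M (jn M x y) z = jn M x (jn M y z) \<and> mt M (mt M x y) z = mt M x (mt M y z))
   \<and> (\<forall>x\<in>car M. \<forall>y\<in>car M. jn M x (mt M x y) = x \<and> mt M x (jn M x y) = x)
   \<and> (\<forall>x\<in>car M. \<forall>y\<in>car M. \<forall>z\<in>car M. mt M x (jn M y z) = jn M (mt M x y) (mt M x z))"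

definition lattice_on :: "('a, 'b) alg_scheme \<Rightarrow> bool" where
  "lattice_on M \<longleftrightarrow>
     (\<forall>x\<in>car M. \<forall>y\<in>car M. jn M x y = jn M y x \<and> mt M x y = mt M y x)
   \<and> (\<forall>x\<in>car M. \<forall>y\<in>car M. \<forall>z\<in>car M.
        jn M (jn M x y) z = jn M x (jn M y z) \<and> mt M (mt M x y) z = mt M x (mt M y z))
   \<and> (\<forall>x\<in>car M. \<forall>y\<in>car M. jn M x (mt M x y) = x \<and> mt M x (jn M x y) = x)"

definition comm_monoid_on :: "('a, 'b) alg_scheme \<Rightarrow> bool" where
  "comm_monoid_on M \<longleftrightarrow>
     (\<forall>x\<in>car M. \<forall>y\<in>car M. \<forall>z\<in>car M. add M (add M x y) z = add M x (add M y z))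
   \<and> (\<forall>x\<in>car M. \<forall>y\<in>car M. add M x y = add M y x)
   \<and> (\<forall>x\<in>car M. add M (zr M) x = x)"

definition ucdlm :: "('a, 'b) alg_scheme \<Rightarrow> bool" where
  "ucdlm M \<longleftrightarrow> is_alg M \<and> distrib_lattice_on M \<and> comm_monoid_on M
   \<and> (\<forall>x\<in>car M. \<forall>y\<in>car M. \<forall>z\<in>car M.
        add M x (jn M y z) = jn M (add M x y) (add M x z)
      \<and> add M x (mt M y z) = mt M (add M x y) (add M x z))
   \<and> add M (mone M) (one M) = zr M
   \<and> ale M (mone M) (zr M) \<and> ale M (zr M) (one M)
   \<and> (\<forall>x\<in>car M. \<exists>n. n \<noteq> 0 \<and> ale M (nsum M n (mone M)) x \<and> ale M x (nsum M n (one M)))"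

definition cancellative :: "('a, 'b) alg_scheme \<Rightarrow> bool" where
  "cancellative M \<longleftrightarrow>
     (\<forall>x\<in>car M. \<forall>y\<in>car M. \<forall>z\<in>car M. add M x z = add M y z \<longrightarrow> x = y)"

text \<open>Unital commutative l-group: the record fields give +, join, meet, 0,
  the strong unit u (field one) and -u (field mone); neg is the group inverse.\<close>
record 'a lgrp = "'a alg" +
  neg :: "'a \<Rightarrow> 'a"

definition unital_comm_lgroup :: "('a, 'b) lgrp_scheme \<Rightarrow> bool" where
  "unital_comm_lgroup G \<longleftrightarrow>
     (\<forall>x\<in>car G. \<forall>y\<in>car G. add G x y \<in> car G \<and> jn G x y \<in> car G \<and> mt G x y \<in> car G)
   \<and> zr G \<in> car G \<and> (\<forall>x\<in>car G. neg G x \<in> car G)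
   \<and> comm_monoid_on G
   \<and> (\<forall>x\<in>car G. add G (neg G x) x = zr G)
   \<and> lattice_on G
   \<and> (\<forall>x\<in>car G. \<forall>y\<in>car G. \<forall>z\<in>car G.
        add G x (jn G y z) = jn G (add G x y) (add G x z))
   \<and> one G \<in> car G \<and> ale G (zr G) (one G)
   \<and> (\<forall>g\<in>car G. \<exists>n. ale G g (nsum G n (one G)))
   \<and> mone G = neg G (one G)"

definition embeds :: "('a, 'b) alg_scheme \<Rightarrow> ('c, 'd) lgrp_scheme \<Rightarrow> bool" where
  "embeds M G \<longleftrightarrow> (\<exists>f. f ` car M \<subseteq> car G \<and> inj_on f (car M)
     \<and> (\<forall>x\<in>car M. \<forall>y\<in>car M. f (add M x y) = add G (f x) (f y)
          \<and> f (jn M x y) = jn G (f x) (f y) \<and> f (mt M x y) = mt G (f x) (f y))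
     \<and> f (zr M) = zr G \<and> f (one M) = one G \<and> f (mone M) = mone G)"

end

theory Submission
  imports Defs
begin

text \<open>
  An injective homomorphism reflects equations and the lattice order, so a subalgebra of the
  reduct of a unital commutative \<open>\<ell>\<close>-group inherits cancellativity, every axiom of a unital
  commutative distributive \<open>\<ell>\<close>-monoid and the bounds \<open>n\<cdot>(-1) \<le> x \<le> n\<cdot>1\<close>; the only
  nontrivial inputs are that the lattice of an \<open>\<ell>\<close>-group is distributive and that addition
  distributes over meets. Conversely, a cancellative such monoid embeds, via \<open>x \<mapsto> x - 0\<close>, into
  its group of formal differences \<open>a - b\<close>. Since join and meet are translation invariant,
  \<open>(a - b) \<squnion> (c - d) = ((a + d) \<squnion> (c + b)) - (b + d)\<close> is well defined; any finitely many
  differences have a common denominator, so the lattice laws transfer from the monoid, and \<open>1\<close>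
  is a strong unit because every element of the monoid lies between \<open>n\<cdot>(-1)\<close> and \<open>n\<cdot>1\<close>.
\<close>

section \<open>Lattice-ordered monoids and groups on a carrier\<close>

locale lattice_alg =
  fixes L :: "('a, 'b) alg_scheme"
  assumes jn_closed [simp]: "x \<in> car L \<Longrightarrow> y \<in> car L \<Longrightarrow> jn L x y \<in> car L"
    and mt_closed [simp]: "x \<in> car L \<Longrightarrow> y \<in> car L \<Longrightarrow> mt L x y \<in> car L"
    and lattice: "lattice_on L"
begin

abbreviation jn_syntax (infixl "\<curlyvee>" 67) where "x \<curlyvee> y \<equiv> jn L x y"
abbreviation mt_syntax (infixl "\<curlywedge>" 68) where "x \<curlywedge> y \<equiv> mt L x y"
abbreviation ale_syntax (infix "\<preceq>" 50) where "x \<preceq> y \<equiv> ale L x y"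

lemma jn_commute: "x \<in> car L \<Longrightarrow> y \<in> car L \<Longrightarrow> x \<curlyvee> y = y \<curlyvee> x"
  and mt_commute: "x \<in> car L \<Longrightarrow> y \<in> car L \<Longrightarrow> x \<curlywedge> y = y \<curlywedge> x"
  and jn_assoc: "x \<in> car L \<Longrightarrow> y \<in> car L \<Longrightarrow> z \<in> car L \<Longrightarrow> x \<curlyvee> y \<curlyvee> z = x \<curlyvee> (y \<curlyvee> z)"
  and mt_assoc: "x \<in> car L \<Longrightarrow> y \<in> car L \<Longrightarrow> z \<in> car L \<Longrightarrow> x \<curlywedge> y \<curlywedge> z = x \<curlywedge> (y \<curlywedge> z)"
  and jn_mt_absorb: "x \<in> car L \<Longrightarrow> y \<in> car L \<Longrightarrow> x \<curlyvee> (x \<curlywedge> y) = x"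
  and mt_jn_absorb: "x \<in> car L \<Longrightarrow> y \<in> car L \<Longrightarrow> x \<curlywedge> (x \<curlyvee> y) = x"
  using lattice unfolding lattice_on_def by auto

lemma jn_left_commute: "x \<in> car L \<Longrightarrow> y \<in> car L \<Longrightarrow> z \<in> car L \<Longrightarrow> x \<curlyvee> (y \<curlyvee> z) = y \<curlyvee> (x \<curlyvee> z)"
  by (metis jn_assoc jn_commute)

lemma mt_left_commute: "x \<in> car L \<Longrightarrow> y \<in> car L \<Longrightarrow> z \<in> car L \<Longrightarrow> x \<curlywedge> (y \<curlywedge> z) = y \<curlywedge> (x \<curlywedge> z)"
  by (metis mt_assoc mt_commute)

lemmas jn_ac = jn_assoc jn_commute jn_left_commute
lemmas mt_ac = mt_assoc mt_commute mt_left_commute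

lemma jn_idem [simp]: "x \<in> car L \<Longrightarrow> x \<curlyvee> x = x"
  using jn_mt_absorb[of x "x \<curlyvee> x"] by (simp add: mt_jn_absorb)

lemma mt_idem [simp]: "x \<in> car L \<Longrightarrow> x \<curlywedge> x = x"
  using mt_jn_absorb[of x "x \<curlywedge> x"] by (simp add: jn_mt_absorb)

lemma ale_iff_mt: assumes "x \<in> car L" "y \<in> car L" shows "x \<preceq> y \<longleftrightarrow> x \<curlywedge> y = x"
proof
  assume "x \<preceq> y"
  then show "x \<curlywedge> y = x" using mt_jn_absorb[OF assms] by (simp add: ale_def)
next
  assume "x \<curlywedge> y = x"
  then have "x \<curlyvee> y = y \<curlyvee> (y \<curlywedge> x)" using assms by (metis jn_commute mt_commute)
  then show "x \<preceq> y" using assms by (simp add: ale_def jn_mt_absorb)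
qed

lemma ale_refl: "x \<in> car L \<Longrightarrow> x \<preceq> x"
  by (simp add: ale_def)

lemma ale_trans: "x \<in> car L \<Longrightarrow> y \<in> car L \<Longrightarrow> z \<in> car L \<Longrightarrow> x \<preceq> y \<Longrightarrow> y \<preceq> z \<Longrightarrow> x \<preceq> z"
  unfolding ale_def by (metis jn_assoc)

lemma ale_antisym: "x \<in> car L \<Longrightarrow> y \<in> car L \<Longrightarrow> x \<preceq> y \<Longrightarrow> y \<preceq> x \<Longrightarrow> x = y"
  unfolding ale_def by (metis jn_commute)

lemma jn_ge1: "x \<in> car L \<Longrightarrow> y \<in> car L \<Longrightarrow> x \<preceq> x \<curlyvee> y"
  unfolding ale_def by (simp add: jn_assoc[symmetric])

lemma jn_ge2: "x \<in> car L \<Longrightarrow> y \<in> car L \<Longrightarrow> y \<preceq> x \<curlyvee> y"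
  using jn_ge1[of y x] by (simp add: jn_commute)

lemma jn_least: "x \<in> car L \<Longrightarrow> y \<in> car L \<Longrightarrow> z \<in> car L \<Longrightarrow> x \<preceq> z \<Longrightarrow> y \<preceq> z \<Longrightarrow> x \<curlyvee> y \<preceq> z"
  unfolding ale_def by (simp add: jn_assoc)

lemma mt_le1: "x \<in> car L \<Longrightarrow> y \<in> car L \<Longrightarrow> x \<curlywedge> y \<preceq> x"
  by (simp add: ale_iff_mt mt_commute[of _ x] mt_assoc[symmetric])

lemma mt_le2: "x \<in> car L \<Longrightarrow> y \<in> car L \<Longrightarrow> x \<curlywedge> y \<preceq> y"
  using mt_le1[of y x] by (simp add: mt_commute)

lemma mt_greatest: "x \<in> car L \<Longrightarrow> y \<in> car L \<Longrightarrow> z \<in> car L \<Longrightarrow> z \<preceq> x \<Longrightarrow> z \<preceq> y \<Longrightarrow> z \<preceq> x \<curlywedge> y"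
  by (simp add: ale_iff_mt mt_assoc[symmetric])

end

locale lattice_monoid = lattice_alg +
  assumes add_closed [simp]: "x \<in> car L \<Longrightarrow> y \<in> car L \<Longrightarrow> add L x y \<in> car L"
    and zr_closed [simp]: "zr L \<in> car L"
    and comm_monoid: "comm_monoid_on L"
    and add_jn_distrib:
      "x \<in> car L \<Longrightarrow> y \<in> car L \<Longrightarrow> z \<in> car L \<Longrightarrow> add L x (jn L y z) = jn L (add L x y) (add L x z)"
begin

abbreviation add_syntax (infixl "\<oplus>" 65) where "x \<oplus> y \<equiv> add L x y"

lemma add_assoc: "x \<in> car L \<Longrightarrow> y \<in> car L \<Longrightarrow> z \<in> car L \<Longrightarrow> x \<oplus> y \<oplus> z = x \<oplus> (y \<oplus> z)"
  and add_commute: "x \<in> car L \<Longrightarrow> y \<in> car L \<Longrightarrow> x \<oplus> y = y \<oplus> x"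
  and zr_add [simp]: "x \<in> car L \<Longrightarrow> zr L \<oplus> x = x"
  using comm_monoid unfolding comm_monoid_on_def by auto

lemma add_left_commute: "x \<in> car L \<Longrightarrow> y \<in> car L \<Longrightarrow> z \<in> car L \<Longrightarrow> x \<oplus> (y \<oplus> z) = y \<oplus> (x \<oplus> z)"
proof -
  assume xyz: "x \<in> car L" "y \<in> car L" "z \<in> car L"
  then have "x \<oplus> (y \<oplus> z) = (x \<oplus> y) \<oplus> z" by (simp add: add_assoc)
  also have "\<dots> = y \<oplus> (x \<oplus> z)" using xyz by (simp add: add_commute[of x y] add_assoc)
  finally show ?thesis .
qed

lemmas add_ac = add_assoc add_commute add_left_commute

lemma add_zr [simp]: "x \<in> car L \<Longrightarrow> x \<oplus> zr L = x"
  using add_commute[of x "zr L"] by simp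

lemma jn_add_distrib: "x \<in> car L \<Longrightarrow> y \<in> car L \<Longrightarrow> z \<in> car L \<Longrightarrow> (y \<curlyvee> z) \<oplus> x = (y \<oplus> x) \<curlyvee> (z \<oplus> x)"
  by (simp add: add_commute[of _ x] add_jn_distrib)

lemma add_left_mono: "x \<in> car L \<Longrightarrow> y \<in> car L \<Longrightarrow> z \<in> car L \<Longrightarrow> y \<preceq> z \<Longrightarrow> x \<oplus> y \<preceq> x \<oplus> z"
  unfolding ale_def by (simp add: add_jn_distrib[symmetric])

lemma add_right_mono: "x \<in> car L \<Longrightarrow> y \<in> car L \<Longrightarrow> z \<in> car L \<Longrightarrow> y \<preceq> z \<Longrightarrow> y \<oplus> x \<preceq> z \<oplus> x"
  by (simp add: add_commute[of _ x] add_left_mono)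

lemma add_mono:
  "\<lbrakk>a \<in> car L; b \<in> car L; c \<in> car L; d \<in> car L; a \<preceq> b; c \<preceq> d\<rbrakk> \<Longrightarrow> a \<oplus> c \<preceq> b \<oplus> d"
  by (rule ale_trans[of _ "b \<oplus> c"]) (simp_all add: add_left_mono add_right_mono)

lemma jn_add_le_add:
  assumes "y \<in> car L" "z \<in> car L" "t \<in> car L" "t \<preceq> y" "t \<preceq> z"
  shows "(y \<curlyvee> z) \<oplus> t \<preceq> y \<oplus> z"
proof -
  have "y \<oplus> t \<preceq> y \<oplus> z" using assms by (simp add: add_left_mono)
  moreover have "z \<oplus> t \<preceq> y \<oplus> z" using assms add_left_mono[of z t y] by (simp add: add_commute[of z y])
  ultimately show ?thesis using assms by (simp add: jn_add_distrib jn_least)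
qed

lemma add_ale_mt_of_sums:
  assumes closed: "x \<in> car L" "y \<in> car L" "z \<in> car L" "u \<in> car L" "t \<in> car L"
    and u_le: "u \<preceq> x" "u \<preceq> y \<curlyvee> z" and t_le: "t \<preceq> x" "t \<preceq> y" "t \<preceq> z"
  shows "u \<oplus> t \<preceq> ((x \<oplus> x) \<curlywedge> (y \<oplus> x)) \<curlywedge> ((x \<oplus> z) \<curlywedge> (y \<oplus> z))"
proof -
  have "u \<oplus> t \<preceq> (y \<curlyvee> z) \<oplus> t" using closed u_le by (simp add: add_right_mono)
  moreover have "(y \<curlyvee> z) \<oplus> t \<preceq> y \<oplus> z" using closed t_le by (simp add: jn_add_le_add)
  ultimately have "u \<oplus> t \<preceq> y \<oplus> z"
    using closed ale_trans[of "u \<oplus> t" "(y \<curlyvee> z) \<oplus> t" "y \<oplus> z"] by simp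
  moreover have "u \<oplus> t \<preceq> x \<oplus> x" "u \<oplus> t \<preceq> y \<oplus> x" "u \<oplus> t \<preceq> x \<oplus> z"
    using closed u_le t_le by (simp_all add: add_mono add_commute[of y x])
  ultimately show ?thesis using closed by (simp add: mt_greatest)
qed

lemma nsum_closed [simp]: "x \<in> car L \<Longrightarrow> nsum L n x \<in> car L"
  by (induction n) auto

lemma nsum_add: "x \<in> car L \<Longrightarrow> nsum L (m + n) x = nsum L m x \<oplus> nsum L n x"
  by (induction m) (auto simp: add_assoc)

lemma nsum_mono: "x \<in> car L \<Longrightarrow> zr L \<preceq> x \<Longrightarrow> m \<le> n \<Longrightarrow> nsum L m x \<preceq> nsum L n x"
proof (induction n)
  case 0
  then show ?case by (simp add: ale_refl)
next
  case (Suc n)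
  show ?case
  proof (cases "m = Suc n")
    case True
    then show ?thesis using Suc.prems by (simp only: ale_refl nsum_closed)
  next
    case False
    then have "nsum L m x \<preceq> nsum L n x" using Suc by simp
    moreover have "nsum L n x \<preceq> x \<oplus> nsum L n x"
      using Suc.prems add_right_mono[of "nsum L n x" "zr L" x] by simp
    ultimately show ?thesis
      using Suc.prems ale_trans[of "nsum L m x" "nsum L n x" "x \<oplus> nsum L n x"] by simp
  qed
qed

end

locale comm_lgroup = lattice_monoid L for L :: "('a, 'b) lgrp_scheme" +
  assumes neg_closed [simp]: "x \<in> car L \<Longrightarrow> neg L x \<in> car L"
    and neg_add [simp]: "x \<in> car L \<Longrightarrow> add L (neg L x) x = zr L"
begin

lemma add_neg [simp]: "x \<in> car L \<Longrightarrow> x \<oplus> neg L x = zr L"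
  using add_commute[of x "neg L x"] by simp

lemma neg_add_cancel_left [simp]: "x \<in> car L \<Longrightarrow> y \<in> car L \<Longrightarrow> neg L x \<oplus> (x \<oplus> y) = y"
  by (simp add: add_assoc[symmetric])

lemma add_neg_cancel_left [simp]: "x \<in> car L \<Longrightarrow> y \<in> car L \<Longrightarrow> x \<oplus> (neg L x \<oplus> y) = y"
  by (simp add: add_assoc[symmetric])

lemma add_right_cancel:
  assumes "x \<in> car L" "y \<in> car L" "z \<in> car L" "x \<oplus> z = y \<oplus> z"
  shows "x = y"
proof -
  have "x = neg L z \<oplus> (z \<oplus> x)" using assms by simp
  also have "\<dots> = neg L z \<oplus> (z \<oplus> y)" using assms by (simp add: add_commute[of z])
  finally show ?thesis using assms by simp
qed

lemma neg_neg [simp]: "x \<in> car L \<Longrightarrow> neg L (neg L x) = x"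
  by (rule add_right_cancel[of _ _ "neg L x"]) auto

lemma add_le_cancel_right:
  "x \<in> car L \<Longrightarrow> y \<in> car L \<Longrightarrow> z \<in> car L \<Longrightarrow> y \<oplus> x \<preceq> z \<oplus> x \<Longrightarrow> y \<preceq> z"
  using add_right_mono[of "neg L x" "y \<oplus> x" "z \<oplus> x"] by (simp add: add_assoc)

lemma ale_add_left_iff:
  "a \<in> car L \<Longrightarrow> b \<in> car L \<Longrightarrow> x \<in> car L \<Longrightarrow> a \<preceq> x \<oplus> b \<longleftrightarrow> neg L x \<oplus> a \<preceq> b"
  using add_left_mono[of "neg L x" a "x \<oplus> b"] add_left_mono[of x "neg L x \<oplus> a" b] by auto

lemma neg_antimono: assumes "x \<in> car L" "y \<in> car L" "x \<preceq> y" shows "neg L y \<preceq> neg L x"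
proof -
  have "(neg L y \<oplus> neg L x) \<oplus> x \<preceq> (neg L y \<oplus> neg L x) \<oplus> y"
    using assms by (simp add: add_left_mono)
  then show ?thesis using assms by (simp add: add_assoc add_left_commute[of "neg L y"])
qed

lemma neg_jn: assumes "a \<in> car L" "b \<in> car L" shows "neg L (a \<curlyvee> b) = neg L a \<curlywedge> neg L b"
proof (rule ale_antisym)
  show "neg L (a \<curlyvee> b) \<preceq> neg L a \<curlywedge> neg L b"
    using assms by (simp add: mt_greatest neg_antimono jn_ge1 jn_ge2)
  have "a \<curlyvee> b \<preceq> neg L (neg L a \<curlywedge> neg L b)"
    using assms neg_antimono[OF _ _ mt_le1, of "neg L a" "neg L b"] neg_antimono[OF _ _ mt_le2, of "neg L a" "neg L b"]
    by (simp add: jn_least)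
  then show "neg L a \<curlywedge> neg L b \<preceq> neg L (a \<curlyvee> b)"
    using assms neg_antimono[of "a \<curlyvee> b" "neg L (neg L a \<curlywedge> neg L b)"] by simp
qed (use assms in auto)

lemma add_mt_distrib:
  assumes "x \<in> car L" "y \<in> car L" "z \<in> car L"
  shows "x \<oplus> (y \<curlywedge> z) = (x \<oplus> y) \<curlywedge> (x \<oplus> z)"
proof (rule ale_antisym)
  show "x \<oplus> (y \<curlywedge> z) \<preceq> (x \<oplus> y) \<curlywedge> (x \<oplus> z)"
    using assms by (simp add: mt_greatest add_left_mono mt_le1 mt_le2)
  have "neg L x \<oplus> ((x \<oplus> y) \<curlywedge> (x \<oplus> z)) \<preceq> y \<curlywedge> z"
    using assms by (simp add: mt_greatest ale_add_left_iff[symmetric] mt_le1 mt_le2)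
  then show "(x \<oplus> y) \<curlywedge> (x \<oplus> z) \<preceq> x \<oplus> (y \<curlywedge> z)"
    using assms by (simp add: ale_add_left_iff)
qed (use assms in auto)

lemma mt_add_distrib:
  "x \<in> car L \<Longrightarrow> y \<in> car L \<Longrightarrow> z \<in> car L \<Longrightarrow> (y \<curlywedge> z) \<oplus> x = (y \<oplus> x) \<curlywedge> (z \<oplus> x)"
  by (simp add: add_commute[of _ x] add_mt_distrib)

lemma jn_add_mt: assumes "a \<in> car L" "b \<in> car L" shows "(a \<curlyvee> b) \<oplus> (a \<curlywedge> b) = a \<oplus> b"
proof -
  have "a \<oplus> b \<oplus> neg L (a \<curlyvee> b) = (a \<oplus> b \<oplus> neg L a) \<curlywedge> (a \<oplus> b \<oplus> neg L b)"
    using assms by (simp add: neg_jn add_mt_distrib)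
  also have "\<dots> = a \<curlywedge> b"
  proof -
    have "a \<oplus> b \<oplus> neg L a = b" "a \<oplus> b \<oplus> neg L b = a"
      using assms by (simp_all add: add_commute[of a] add_assoc)
    then show ?thesis using assms by (simp add: mt_commute)
  qed
  finally have "a \<curlywedge> b = a \<oplus> b \<oplus> neg L (a \<curlyvee> b)" ..
  then show ?thesis using assms by (simp add: add_commute[of "a \<curlyvee> b"] add_assoc)
qed

lemma mt_jn_distrib:
  assumes x: "x \<in> car L" and y: "y \<in> car L" and z: "z \<in> car L"
  shows "x \<curlywedge> (y \<curlyvee> z) = (x \<curlywedge> y) \<curlyvee> (x \<curlywedge> z)"
proof -
  define u where "u = x \<curlywedge> (y \<curlyvee> z)"
  define v where "v = (x \<curlywedge> y) \<curlyvee> (x \<curlywedge> z)"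
  define t where "t = (x \<curlywedge> y) \<curlywedge> (x \<curlywedge> z)"
  have closed: "u \<in> car L" "v \<in> car L" "t \<in> car L" "x \<curlywedge> y \<in> car L" "x \<curlywedge> z \<in> car L"
    unfolding u_def v_def t_def using assms by simp_all
  have u_le: "u \<preceq> x" "u \<preceq> y \<curlyvee> z" unfolding u_def using assms by (simp_all add: mt_le1 mt_le2)
  have "t \<preceq> x \<curlywedge> y" "t \<preceq> x \<curlywedge> z" unfolding t_def using closed by (simp_all add: mt_le1 mt_le2)
  then have t_le: "t \<preceq> x" "t \<preceq> y" "t \<preceq> z"
    using assms closed mt_le1[of x y] mt_le2[of x y] mt_le2[of x z]
      ale_trans[of t "x \<curlywedge> y" x] ale_trans[of t "x \<curlywedge> y" y] ale_trans[of t "x \<curlywedge> z" z]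
    by simp_all
  have "x \<curlywedge> y \<preceq> y \<curlyvee> z" "x \<curlywedge> z \<preceq> y \<curlyvee> z"
    using assms mt_le2[of x y] mt_le2[of x z] jn_ge1[of y z] jn_ge2[of y z]
      ale_trans[of "x \<curlywedge> y" y "y \<curlyvee> z"] ale_trans[of "x \<curlywedge> z" z "y \<curlyvee> z"]
    by simp_all
  then have v_le_u: "v \<preceq> u"
    unfolding u_def v_def using assms by (simp add: jn_least mt_greatest mt_le1)
  have "v \<oplus> t = (x \<curlywedge> y) \<oplus> (x \<curlywedge> z)"
    unfolding v_def t_def using closed(4,5) by (rule jn_add_mt)
  also have "\<dots> = ((x \<oplus> x) \<curlywedge> (y \<oplus> x)) \<curlywedge> ((x \<oplus> z) \<curlywedge> (y \<oplus> z))"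
    using assms by (simp add: add_mt_distrib mt_add_distrib)
  finally have "u \<oplus> t \<preceq> v \<oplus> t"
    using assms closed u_le t_le by (simp add: add_ale_mt_of_sums)
  then have "u \<preceq> v" by (rule add_le_cancel_right[OF closed(3,1,2)])
  with v_le_u show ?thesis
    using closed ale_antisym[of u v] by (simp add: u_def v_def)
qed

lemma neg_add_distrib: assumes "a \<in> car L" "b \<in> car L" shows "neg L (a \<oplus> b) = neg L a \<oplus> neg L b"
proof (rule add_right_cancel)
  have "neg L b \<oplus> (a \<oplus> b) = a" using assms by (simp add: add_left_commute[of "neg L b" a])
  then have "(neg L a \<oplus> neg L b) \<oplus> (a \<oplus> b) = zr L" using assms by (simp add: add_assoc)
  then show "neg L (a \<oplus> b) \<oplus> (a \<oplus> b) = (neg L a \<oplus> neg L b) \<oplus> (a \<oplus> b)"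
    using assms by simp
qed (use assms in simp_all)

lemma neg_zr [simp]: "neg L (zr L) = zr L"
  using neg_add[of "zr L"] by simp

lemma nsum_neg: "x \<in> car L \<Longrightarrow> nsum L n (neg L x) = neg L (nsum L n x)"
  by (induction n) (simp_all add: neg_add_distrib)

end

section \<open>Unital commutative \<open>\<ell>\<close>-groups are cancellative distributive \<open>\<ell>\<close>-monoids\<close>

lemma unital_comm_lgroup_imp_comm_lgroup: "unital_comm_lgroup G \<Longrightarrow> comm_lgroup G"
  by unfold_locales (auto simp: unital_comm_lgroup_def)

lemma unital_comm_lgroup_bounds:
  assumes G: "unital_comm_lgroup G" and x: "x \<in> car G"
  shows "\<exists>n. n \<noteq> 0 \<and> ale G (nsum G n (mone G)) x \<and> ale G x (nsum G n (one G))"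
proof -
  interpret comm_lgroup G using G by (rule unital_comm_lgroup_imp_comm_lgroup)
  have one: "one G \<in> car G" "ale G (zr G) (one G)" and mone: "mone G = neg G (one G)"
    using G by (auto simp: unital_comm_lgroup_def)
  txt \<open>The strong unit only bounds from above; the lower bound comes from bounding \<open>-x\<close>.\<close>
  have below_multiple: "\<exists>n. \<forall>N\<ge>n. ale G g (nsum G N (one G))" if g: "g \<in> car G" for g
  proof -
    obtain n where g_le: "ale G g (nsum G n (one G))"
      using G g by (auto simp: unital_comm_lgroup_def)
    show ?thesis
    proof (intro exI[of _ n] allI impI)
      fix N assume "n \<le> N"
      then have "ale G (nsum G n (one G)) (nsum G N (one G))" using one by (simp add: nsum_mono)
      with g_le show "ale G g (nsum G N (one G))"
        using g one ale_trans[of g "nsum G n (one G)"] by simp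
    qed
  qed
  obtain n1 n2 where n1: "\<forall>N\<ge>n1. ale G x (nsum G N (one G))" and n2: "\<forall>N\<ge>n2. ale G (neg G x) (nsum G N (one G))"
    using below_multiple x by (meson neg_closed)
  define N where "N = Suc (n1 + n2)"
  have x_le: "ale G x (nsum G N (one G))" and neg_x_le: "ale G (neg G x) (nsum G N (one G))"
    using n1 n2 unfolding N_def by (simp_all del: nsum.simps)
  have "ale G (neg G (nsum G N (one G))) (neg G (neg G x))"
    using neg_x_le x one by (intro neg_antimono) simp_all
  then have "ale G (nsum G N (mone G)) x"
    using x one by (simp add: mone nsum_neg)
  moreover note x_le
  ultimately show ?thesis by (auto simp: N_def)
qed

lemma unital_comm_lgroup_cancellative_ucdlm:
  assumes G: "unital_comm_lgroup G"
  shows "cancellative G \<and> ucdlm G"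
proof
  interpret comm_lgroup G using G by (rule unital_comm_lgroup_imp_comm_lgroup)
  have one: "one G \<in> car G" "ale G (zr G) (one G)" and mone: "mone G = neg G (one G)"
    using G by (auto simp: unital_comm_lgroup_def)
  show "cancellative G"
    unfolding cancellative_def by (blast intro: add_right_cancel)
  have "is_alg G" using one by (simp add: is_alg_def mone)
  moreover have "distrib_lattice_on G"
    using lattice mt_jn_distrib unfolding distrib_lattice_on_def lattice_on_def by blast
  moreover have "ale G (mone G) (zr G)" using neg_antimono[OF _ _ one(2)] one by (simp add: mone)
  ultimately show "ucdlm G"
    unfolding ucdlm_def
    using comm_monoid one mone unital_comm_lgroup_bounds[OF G]
    by (simp add: add_jn_distrib add_mt_distrib)
qed

section \<open>Pulling the axioms back along embeddings\<close>

lemma ucdlm_imp_lattice_monoid: "ucdlm M \<Longrightarrow> lattice_monoid M"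
  by unfold_locales (auto simp: ucdlm_def is_alg_def distrib_lattice_on_def lattice_on_def)

locale alg_embedding =
  fixes f :: "'a \<Rightarrow> 'c" and M :: "('a, 'b) alg_scheme" and N :: "('c, 'd) alg_scheme"
  assumes source_alg: "is_alg M"
    and maps_into [simp]: "x \<in> car M \<Longrightarrow> f x \<in> car N"
    and inj: "inj_on f (car M)"
    and hom [simp]: "x \<in> car M \<Longrightarrow> y \<in> car M \<Longrightarrow> f (add M x y) = add N (f x) (f y)"
      "x \<in> car M \<Longrightarrow> y \<in> car M \<Longrightarrow> f (jn M x y) = jn N (f x) (f y)"
      "x \<in> car M \<Longrightarrow> y \<in> car M \<Longrightarrow> f (mt M x y) = mt N (f x) (f y)"
    and hom_consts [simp]: "f (zr M) = zr N" "f (one M) = one N" "f (mone M) = mone N"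
begin

lemma source_closed [simp]:
  "x \<in> car M \<Longrightarrow> y \<in> car M \<Longrightarrow> add M x y \<in> car M"
  "x \<in> car M \<Longrightarrow> y \<in> car M \<Longrightarrow> jn M x y \<in> car M"
  "x \<in> car M \<Longrightarrow> y \<in> car M \<Longrightarrow> mt M x y \<in> car M"
  "zr M \<in> car M" "one M \<in> car M" "mone M \<in> car M"
  using source_alg by (auto simp: is_alg_def)

lemma eq_iff: "x \<in> car M \<Longrightarrow> y \<in> car M \<Longrightarrow> f x = f y \<longleftrightarrow> x = y"
  using inj by (auto simp: inj_on_def)

lemma ale_iff: "x \<in> car M \<Longrightarrow> y \<in> car M \<Longrightarrow> ale N (f x) (f y) \<longleftrightarrow> ale M x y"
  using eq_iff[of "jn M x y" y] by (simp add: ale_def)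

lemma nsum_closed: "x \<in> car M \<Longrightarrow> nsum M n x \<in> car M"
  by (induction n) simp_all

lemma hom_nsum [simp]: "x \<in> car M \<Longrightarrow> f (nsum M n x) = nsum N n (f x)"
  by (induction n) (simp_all add: nsum_closed)

lemma cancellative_pullback: "cancellative N \<Longrightarrow> cancellative M"
  unfolding cancellative_def by (metis hom(1) eq_iff maps_into)

lemma ucdlm_pullback:
  assumes N: "ucdlm N"
  shows "ucdlm M"
proof -
  interpret N: lattice_monoid N using N by (rule ucdlm_imp_lattice_monoid)
  have N_mt_jn_distrib: "mt N x (jn N y z) = jn N (mt N x y) (mt N x z)"
    and N_add_mt_distrib: "add N x (mt N y z) = mt N (add N x y) (add N x z)"
    if "x \<in> car N" "y \<in> car N" "z \<in> car N" for x y z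
    using N that by (auto simp: ucdlm_def distrib_lattice_on_def)
  have "distrib_lattice_on M"
    unfolding distrib_lattice_on_def
    by (intro conjI ballI; subst eq_iff[symmetric];
        simp add: N.jn_ac N.mt_ac N.jn_mt_absorb N.mt_jn_absorb N_mt_jn_distrib)
  moreover have "comm_monoid_on M"
    unfolding comm_monoid_on_def by (intro conjI ballI; subst eq_iff[symmetric]; simp add: N.add_ac)
  moreover have "\<forall>x\<in>car M. \<forall>y\<in>car M. \<forall>z\<in>car M.
      add M x (jn M y z) = jn M (add M x y) (add M x z) \<and> add M x (mt M y z) = mt M (add M x y) (add M x z)"
    by (intro conjI ballI; subst eq_iff[symmetric]; simp add: N.add_jn_distrib N_add_mt_distrib)
  moreover have "add M (mone M) (one M) = zr M"
    using N by (subst eq_iff[symmetric]) (simp_all add: ucdlm_def)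
  moreover have "ale M (mone M) (zr M) \<and> ale M (zr M) (one M)"
    using N by (simp add: ucdlm_def flip: ale_iff)
  moreover have "\<exists>n. n \<noteq> 0 \<and> ale M (nsum M n (mone M)) x \<and> ale M x (nsum M n (one M))"
    if "x \<in> car M" for x
    using N that by (simp add: ucdlm_def nsum_closed flip: ale_iff)
  ultimately show ?thesis using source_alg unfolding ucdlm_def by blast
qed

end

lemma embeds_iff_alg_embedding: "is_alg M \<Longrightarrow> embeds M G \<longleftrightarrow> (\<exists>f. alg_embedding f M G)"
  unfolding embeds_def alg_embedding_def by (auto simp: image_subset_iff)

section \<open>The group of formal differences\<close>

locale cancellative_ucdlm =
  fixes L :: "('a, 'b) alg_scheme"
  assumes alg: "is_alg L" and cancellative: "cancellative L" and ucdlm: "ucdlm L"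

sublocale cancellative_ucdlm \<subseteq> lattice_monoid L
  using ucdlm by (rule ucdlm_imp_lattice_monoid)

context cancellative_ucdlm
begin

lemma one_closed [simp]: "one L \<in> car L" and mone_closed [simp]: "mone L \<in> car L"
  using alg by (auto simp: is_alg_def)

lemma add_right_cancel_iff [simp]:
  "x \<in> car L \<Longrightarrow> y \<in> car L \<Longrightarrow> z \<in> car L \<Longrightarrow> x \<oplus> z = y \<oplus> z \<longleftrightarrow> x = y"
  using cancellative by (auto simp: cancellative_def)

lemma mt_add_distrib:
  "x \<in> car L \<Longrightarrow> y \<in> car L \<Longrightarrow> z \<in> car L \<Longrightarrow> (y \<curlywedge> z) \<oplus> x = (y \<oplus> x) \<curlywedge> (z \<oplus> x)"
  using ucdlm by (simp add: ucdlm_def add_commute[of _ x])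

lemma mone_add_one: "mone L \<oplus> one L = zr L"
  and zr_ale_one: "zr L \<preceq> one L"
  and bounded: "x \<in> car L \<Longrightarrow> \<exists>n. nsum L n (mone L) \<preceq> x \<and> x \<preceq> nsum L n (one L)"
  using ucdlm by (auto simp: ucdlm_def)

lemma nsum_one_add_nsum_mone: "nsum L n (one L) \<oplus> nsum L n (mone L) = zr L"
proof (induction n)
  case (Suc n)
  have "nsum L (Suc n) (one L) \<oplus> nsum L (Suc n) (mone L)
      = (mone L \<oplus> one L) \<oplus> (nsum L n (one L) \<oplus> nsum L n (mone L))"
    by (simp add: add_ac)
  then show ?case using Suc by (simp add: mone_add_one)
qed simp

text \<open>\<open>fdiff a b\<close> is the formal difference \<open>a - b\<close>: the class of \<open>(a, b)\<close> under
  \<open>(a, b) \<sim> (c, d) \<longleftrightarrow> a + d = c + b\<close>, an equivalence relation because \<open>L\<close> is cancellative.\<close>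
definition fdiff :: "'a \<Rightarrow> 'a \<Rightarrow> ('a \<times> 'a) set" where
  "fdiff a b = {(c, d). c \<in> car L \<and> d \<in> car L \<and> a \<oplus> d = c \<oplus> b}"

definition fdiffs :: "('a \<times> 'a) set set" where
  "fdiffs = {fdiff a b | a b. a \<in> car L \<and> b \<in> car L}"

definition repr :: "('a \<times> 'a) set \<Rightarrow> 'a \<times> 'a" where
  "repr X = (SOME p. p \<in> X)"

definition fdiff_add :: "('a \<times> 'a) set \<Rightarrow> ('a \<times> 'a) set \<Rightarrow> ('a \<times> 'a) set" where
  "fdiff_add X Y = fdiff (fst (repr X) \<oplus> fst (repr Y)) (snd (repr X) \<oplus> snd (repr Y))"

definition fdiff_neg :: "('a \<times> 'a) set \<Rightarrow> ('a \<times> 'a) set" where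
  "fdiff_neg X = fdiff (snd (repr X)) (fst (repr X))"

definition fdiff_lat ::
  "('a \<Rightarrow> 'a \<Rightarrow> 'a) \<Rightarrow> ('a \<times> 'a) set \<Rightarrow> ('a \<times> 'a) set \<Rightarrow> ('a \<times> 'a) set" where
  "fdiff_lat op X Y = fdiff (op (fst (repr X) \<oplus> snd (repr Y)) (fst (repr Y) \<oplus> snd (repr X)))
     (snd (repr X) \<oplus> snd (repr Y))"

lemma fdiff_eq_iff:
  assumes "a \<in> car L" "b \<in> car L" "c \<in> car L" "d \<in> car L"
  shows "fdiff a b = fdiff c d \<longleftrightarrow> a \<oplus> d = c \<oplus> b"
proof
  assume "fdiff a b = fdiff c d"
  moreover have "(c, d) \<in> fdiff c d" using assms by (simp add: fdiff_def)
  ultimately have "(c, d) \<in> fdiff a b" by simp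
  then show "a \<oplus> d = c \<oplus> b" by (simp add: fdiff_def)
next
  assume ad_cb: "a \<oplus> d = c \<oplus> b"
  have "a \<oplus> y = x \<oplus> b \<longleftrightarrow> c \<oplus> y = x \<oplus> d" if "x \<in> car L" "y \<in> car L" for x y
  proof -
    have "a \<oplus> y = x \<oplus> b \<longleftrightarrow> (a \<oplus> d) \<oplus> y = (x \<oplus> d) \<oplus> b"
      using assms that add_right_cancel_iff[of "a \<oplus> y" "x \<oplus> b" d] by (simp add: add_ac)
    also have "\<dots> \<longleftrightarrow> (c \<oplus> y) \<oplus> b = (x \<oplus> d) \<oplus> b"
      using assms that by (simp add: ad_cb add_ac)
    also have "\<dots> \<longleftrightarrow> c \<oplus> y = x \<oplus> d" using assms that by simp
    finally show ?thesis .
  qed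
  then show "fdiff a b = fdiff c d" by (auto simp: fdiff_def)
qed

lemma fdiff_shift: "a \<in> car L \<Longrightarrow> b \<in> car L \<Longrightarrow> t \<in> car L \<Longrightarrow> fdiff (a \<oplus> t) (b \<oplus> t) = fdiff a b"
  by (simp add: fdiff_eq_iff add_ac)

lemma repr_fdiff:
  assumes "a \<in> car L" "b \<in> car L"
  obtains a' b' where "repr (fdiff a b) = (a', b')" "a' \<in> car L" "b' \<in> car L" "a \<oplus> b' = a' \<oplus> b"
proof -
  have "(a, b) \<in> fdiff a b" using assms by (simp add: fdiff_def)
  then have "repr (fdiff a b) \<in> fdiff a b" unfolding repr_def by (rule someI)
  then show ?thesis using that by (auto simp: fdiff_def)
qed

lemma cross_sum_eq:
  assumes "a \<in> car L" "b \<in> car L" "a' \<in> car L" "b' \<in> car L" "d \<in> car L" "d' \<in> car L"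
    and "a \<oplus> b' = a' \<oplus> b"
  shows "(a' \<oplus> d') \<oplus> (b \<oplus> d) = (a \<oplus> d) \<oplus> (b' \<oplus> d')"
proof -
  have "(a' \<oplus> d') \<oplus> (b \<oplus> d) = (a' \<oplus> b) \<oplus> (d \<oplus> d')" using assms(1-6) by (simp add: add_ac)
  also have "\<dots> = (a \<oplus> b') \<oplus> (d \<oplus> d')" by (simp only: assms(7))
  also have "\<dots> = (a \<oplus> d) \<oplus> (b' \<oplus> d')" using assms(1-6) by (simp add: add_ac)
  finally show ?thesis .
qed

lemma fdiff_add_fdiff:
  assumes "a \<in> car L" "b \<in> car L" "c \<in> car L" "d \<in> car L"
  shows "fdiff_add (fdiff a b) (fdiff c d) = fdiff (a \<oplus> c) (b \<oplus> d)"
proof -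
  obtain a' b' c' d' where reprs: "repr (fdiff a b) = (a', b')" "repr (fdiff c d) = (c', d')"
    and closed: "a' \<in> car L" "b' \<in> car L" "c' \<in> car L" "d' \<in> car L"
    and eqs: "a \<oplus> b' = a' \<oplus> b" "c \<oplus> d' = c' \<oplus> d"
    using assms by (metis repr_fdiff)
  have "(a' \<oplus> c') \<oplus> (b \<oplus> d) = (a' \<oplus> b) \<oplus> (c' \<oplus> d)" using assms closed by (simp add: add_ac)
  also have "\<dots> = (a \<oplus> b') \<oplus> (c \<oplus> d')" by (simp only: eqs)
  also have "\<dots> = (a \<oplus> c) \<oplus> (b' \<oplus> d')" using assms closed by (simp add: add_ac)
  finally show ?thesis using assms closed by (simp add: fdiff_add_def reprs fdiff_eq_iff)
qed

lemma fdiff_neg_fdiff: "a \<in> car L \<Longrightarrow> b \<in> car L \<Longrightarrow> fdiff_neg (fdiff a b) = fdiff b a"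
  by (rule repr_fdiff[of a b]) (auto simp: fdiff_neg_def fdiff_eq_iff add_commute)

lemma fdiff_lat_fdiff:
  assumes op_closed: "\<And>x y. x \<in> car L \<Longrightarrow> y \<in> car L \<Longrightarrow> op x y \<in> car L"
    and op_shift: "\<And>x y t. x \<in> car L \<Longrightarrow> y \<in> car L \<Longrightarrow> t \<in> car L \<Longrightarrow> op x y \<oplus> t = op (x \<oplus> t) (y \<oplus> t)"
    and abcd: "a \<in> car L" "b \<in> car L" "c \<in> car L" "d \<in> car L"
  shows "fdiff_lat op (fdiff a b) (fdiff c d) = fdiff (op (a \<oplus> d) (c \<oplus> b)) (b \<oplus> d)"
proof -
  obtain a' b' c' d' where reprs: "repr (fdiff a b) = (a', b')" "repr (fdiff c d) = (c', d')"
    and closed: "a' \<in> car L" "b' \<in> car L" "c' \<in> car L" "d' \<in> car L"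
    and eqs: "a \<oplus> b' = a' \<oplus> b" "c \<oplus> d' = c' \<oplus> d"
    using abcd by (metis repr_fdiff)
  have "(a' \<oplus> d') \<oplus> (b \<oplus> d) = (a \<oplus> d) \<oplus> (b' \<oplus> d')"
    by (rule cross_sum_eq[OF abcd(1,2) closed(1,2) abcd(4) closed(4) eqs(1)])
  moreover have "(c' \<oplus> b') \<oplus> (b \<oplus> d) = (c \<oplus> b) \<oplus> (b' \<oplus> d')"
    using cross_sum_eq[of c d c' d' b b'] abcd closed eqs(2)
    by (simp add: add_commute[of b d] add_commute[of b' d'])
  ultimately have "op (a' \<oplus> d') (c' \<oplus> b') \<oplus> (b \<oplus> d) = op (a \<oplus> d) (c \<oplus> b) \<oplus> (b' \<oplus> d')"
    using abcd closed by (simp add: op_shift)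
  then show ?thesis using abcd closed by (simp add: fdiff_lat_def reprs fdiff_eq_iff op_closed)
qed

lemma fdiff_lat_same_denominator:
  assumes "\<And>x y. x \<in> car L \<Longrightarrow> y \<in> car L \<Longrightarrow> op x y \<in> car L"
    and "\<And>x y t. x \<in> car L \<Longrightarrow> y \<in> car L \<Longrightarrow> t \<in> car L \<Longrightarrow> op x y \<oplus> t = op (x \<oplus> t) (y \<oplus> t)"
    and "a \<in> car L" "c \<in> car L" "e \<in> car L"
  shows "fdiff_lat op (fdiff a e) (fdiff c e) = fdiff (op a c) e"
  using assms by (simp add: fdiff_lat_fdiff assms(2)[symmetric] fdiff_shift)

lemmas fdiff_jn_fdiff = fdiff_lat_fdiff[where op = "jn L", OF jn_closed jn_add_distrib]
  and fdiff_mt_fdiff = fdiff_lat_fdiff[where op = "mt L", OF mt_closed mt_add_distrib]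
  and fdiff_jn_same_denominator = fdiff_lat_same_denominator[where op = "jn L", OF jn_closed jn_add_distrib]
  and fdiff_mt_same_denominator = fdiff_lat_same_denominator[where op = "mt L", OF mt_closed mt_add_distrib]

lemma fdiff_in_fdiffs [simp]: "a \<in> car L \<Longrightarrow> b \<in> car L \<Longrightarrow> fdiff a b \<in> fdiffs"
  by (auto simp: fdiffs_def)

lemma fdiffsE:
  assumes "X \<in> fdiffs"
  obtains a b where "a \<in> car L" "b \<in> car L" "X = fdiff a b"
  using assms by (auto simp: fdiffs_def)

lemma fdiffs_common_denominator2:
  assumes "X \<in> fdiffs" "Y \<in> fdiffs"
  obtains a c e where "a \<in> car L" "c \<in> car L" "e \<in> car L" "X = fdiff a e" "Y = fdiff c e"
proof -
  obtain a b c d where "a \<in> car L" "b \<in> car L" "c \<in> car L" "d \<in> car L" "X = fdiff a b" "Y = fdiff c d"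
    using assms by (metis fdiffsE)
  then show ?thesis
    using that[of "a \<oplus> d" "c \<oplus> b" "b \<oplus> d"] by (simp add: fdiff_eq_iff add_ac)
qed

lemma fdiffs_common_denominator3:
  assumes "X \<in> fdiffs" "Y \<in> fdiffs" "Z \<in> fdiffs"
  obtains a c g e where "a \<in> car L" "c \<in> car L" "g \<in> car L" "e \<in> car L"
    "X = fdiff a e" "Y = fdiff c e" "Z = fdiff g e"
proof -
  obtain a c e where ace: "a \<in> car L" "c \<in> car L" "e \<in> car L" "X = fdiff a e" "Y = fdiff c e"
    using assms(1,2) by (rule fdiffs_common_denominator2)
  obtain g h where gh: "g \<in> car L" "h \<in> car L" "Z = fdiff g h"
    using assms(3) by (rule fdiffsE)
  show ?thesis
    using that[of "a \<oplus> h" "c \<oplus> h" "g \<oplus> e" "e \<oplus> h"] ace gh by (simp add: fdiff_eq_iff add_ac)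
qed

definition diff_group :: "('a \<times> 'a) set lgrp" where
  "diff_group = \<lparr>car = fdiffs, add = fdiff_add, jn = fdiff_lat (jn L), mt = fdiff_lat (mt L),
     zr = fdiff (zr L) (zr L), one = fdiff (one L) (zr L), mone = fdiff (mone L) (zr L), neg = fdiff_neg\<rparr>"

lemma diff_group_simps [simp]:
  "car diff_group = fdiffs" "add diff_group = fdiff_add" "jn diff_group = fdiff_lat (jn L)"
  "mt diff_group = fdiff_lat (mt L)" "zr diff_group = fdiff (zr L) (zr L)"
  "one diff_group = fdiff (one L) (zr L)" "mone diff_group = fdiff (mone L) (zr L)"
  "neg diff_group = fdiff_neg"
  by (simp_all add: diff_group_def)

lemma diff_group_ale_iff:
  "a \<in> car L \<Longrightarrow> c \<in> car L \<Longrightarrow> e \<in> car L \<Longrightarrow> ale diff_group (fdiff a e) (fdiff c e) \<longleftrightarrow> a \<preceq> c"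
  by (simp add: ale_def fdiff_jn_same_denominator fdiff_eq_iff)

lemma diff_group_nsum_one: "nsum diff_group n (fdiff (one L) (zr L)) = fdiff (nsum L n (one L)) (zr L)"
  by (induction n) (simp_all add: fdiff_add_fdiff)

lemma diff_group_strong_unit:
  assumes "X \<in> fdiffs"
  shows "\<exists>n. ale diff_group X (nsum diff_group n (one diff_group))"
proof -
  obtain a b where ab: "a \<in> car L" "b \<in> car L" "X = fdiff a b"
    using assms by (rule fdiffsE)
  obtain n1 n2 where n1: "a \<preceq> nsum L n1 (one L)" and n2: "nsum L n2 (mone L) \<preceq> b"
    using bounded ab by metis
  let ?u = "nsum L (n1 + n2) (one L)"
  have "nsum L n1 (one L) = ?u \<oplus> nsum L n2 (mone L)"
    by (simp add: nsum_add add_assoc nsum_one_add_nsum_mone)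
  also have "\<dots> \<preceq> ?u \<oplus> b" using n2 ab by (simp add: add_left_mono)
  finally have "a \<preceq> ?u \<oplus> b" using n1 ab ale_trans[of a "nsum L n1 (one L)" "?u \<oplus> b"] by simp
  then have "ale diff_group X (fdiff (?u \<oplus> b) b)" using ab by (simp add: diff_group_ale_iff)
  moreover have "fdiff (?u \<oplus> b) b = nsum diff_group (n1 + n2) (one diff_group)"
    using fdiff_shift[of ?u "zr L" b] ab by (simp add: diff_group_nsum_one)
  ultimately show ?thesis by auto
qed

lemma diff_group_lattice_on: "lattice_on diff_group"
  unfolding lattice_on_def diff_group_simps
proof (intro conjI ballI)
  fix X Y assume "X \<in> fdiffs" "Y \<in> fdiffs"
  then obtain a c e where "a \<in> car L" "c \<in> car L" "e \<in> car L" "X = fdiff a e" "Y = fdiff c e"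
    by (rule fdiffs_common_denominator2)
  then show "fdiff_lat (jn L) X Y = fdiff_lat (jn L) Y X" "fdiff_lat (mt L) X Y = fdiff_lat (mt L) Y X"
    "fdiff_lat (jn L) X (fdiff_lat (mt L) X Y) = X" "fdiff_lat (mt L) X (fdiff_lat (jn L) X Y) = X"
    by (simp_all add: fdiff_jn_same_denominator fdiff_mt_same_denominator
        jn_commute mt_commute jn_mt_absorb mt_jn_absorb)
next
  fix X Y Z assume "X \<in> fdiffs" "Y \<in> fdiffs" "Z \<in> fdiffs"
  then obtain a c g e where "a \<in> car L" "c \<in> car L" "g \<in> car L" "e \<in> car L"
    "X = fdiff a e" "Y = fdiff c e" "Z = fdiff g e"
    by (rule fdiffs_common_denominator3)
  then show "fdiff_lat (jn L) (fdiff_lat (jn L) X Y) Z = fdiff_lat (jn L) X (fdiff_lat (jn L) Y Z)"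
    "fdiff_lat (mt L) (fdiff_lat (mt L) X Y) Z = fdiff_lat (mt L) X (fdiff_lat (mt L) Y Z)"
    by (simp_all add: fdiff_jn_same_denominator fdiff_mt_same_denominator jn_assoc mt_assoc)
qed

lemma diff_group_comm_monoid_on: "comm_monoid_on diff_group"
  unfolding comm_monoid_on_def diff_group_simps
  by (auto elim!: fdiffsE simp: fdiff_add_fdiff fdiff_eq_iff add_ac)

lemma diff_group_unital_comm_lgroup: "unital_comm_lgroup diff_group"
proof -
  have closed: "fdiff_add X Y \<in> fdiffs" "fdiff_lat (jn L) X Y \<in> fdiffs" "fdiff_lat (mt L) X Y \<in> fdiffs"
    if "X \<in> fdiffs" "Y \<in> fdiffs" for X Y
    using that by (auto elim!: fdiffsE simp: fdiff_add_fdiff fdiff_jn_fdiff fdiff_mt_fdiff)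
  have neg: "fdiff_neg X \<in> fdiffs \<and> fdiff_add (fdiff_neg X) X = fdiff (zr L) (zr L)"
    if "X \<in> fdiffs" for X
    using that by (elim fdiffsE) (simp add: fdiff_neg_fdiff fdiff_add_fdiff fdiff_eq_iff add_commute)
  have add_jn: "fdiff_add X (fdiff_lat (jn L) Y Z) = fdiff_lat (jn L) (fdiff_add X Y) (fdiff_add X Z)"
    if XYZ: "X \<in> fdiffs" "Y \<in> fdiffs" "Z \<in> fdiffs" for X Y Z
  proof -
    obtain a c g e where "a \<in> car L" "c \<in> car L" "g \<in> car L" "e \<in> car L"
      "X = fdiff a e" "Y = fdiff c e" "Z = fdiff g e"
      using XYZ by (rule fdiffs_common_denominator3)
    then show ?thesis by (simp add: fdiff_jn_same_denominator fdiff_add_fdiff add_jn_distrib)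
  qed
  have "ale diff_group (zr diff_group) (one diff_group)"
    by (simp add: diff_group_ale_iff zr_ale_one)
  moreover have "fdiff (mone L) (zr L) = fdiff_neg (fdiff (one L) (zr L))"
    by (simp add: fdiff_neg_fdiff fdiff_eq_iff mone_add_one)
  ultimately show ?thesis
    unfolding unital_comm_lgroup_def
    using closed neg add_jn diff_group_comm_monoid_on diff_group_lattice_on diff_group_strong_unit
    by simp
qed

lemma embeds_diff_group: "embeds L diff_group"
  unfolding embeds_def
proof (intro exI[of _ "\<lambda>x. fdiff x (zr L)"] conjI)
  show "inj_on (\<lambda>x. fdiff x (zr L)) (car L)" by (simp add: inj_on_def fdiff_eq_iff)
qed (auto simp: fdiff_add_fdiff fdiff_jn_same_denominator fdiff_mt_same_denominator)

end

lemma embeds_unital_comm_lgroup_imp_cancellative_ucdlm: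
  assumes "is_alg M" "unital_comm_lgroup G" "embeds M G"
  shows "cancellative M \<and> ucdlm M"
proof -
  obtain f where "alg_embedding f M G"
    using assms(1,3) embeds_iff_alg_embedding by blast
  then interpret alg_embedding f M G .
  show ?thesis
    using unital_comm_lgroup_cancellative_ucdlm[OF assms(2)] cancellative_pullback ucdlm_pullback by blast
qed

lemma cancellative_ucdlm_imp_embeds_unital_comm_lgroup:
  fixes M :: "('a, 'b) alg_scheme"
  assumes "is_alg M" "cancellative M" "ucdlm M"
  shows "\<exists>G :: ('a \<times> 'a) set lgrp. unital_comm_lgroup G \<and> embeds M G"
proof -
  interpret cancellative_ucdlm M using assms by unfold_locales
  show ?thesis by (intro exI[of _ diff_group] conjI diff_group_unital_comm_lgroup embeds_diff_group)
qed

theorem mainTheorem3: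
  fixes M :: "'a alg"
  assumes "is_alg M"
  shows "((\<exists>G :: ('a \<times> 'a) set lgrp. unital_comm_lgroup G \<and> embeds M G)
            \<longleftrightarrow> cancellative M \<and> ucdlm M)
       \<and> (\<forall>G :: 'g lgrp. unital_comm_lgroup G \<and> embeds M G \<longrightarrow> cancellative M \<and> ucdlm M)"
proof (rule conjI)
  show "(\<exists>G :: ('a \<times> 'a) set lgrp. unital_comm_lgroup G \<and> embeds M G) \<longleftrightarrow> cancellative M \<and> ucdlm M"
    using embeds_unital_comm_lgroup_imp_cancellative_ucdlm[OF assms]
      cancellative_ucdlm_imp_embeds_unital_comm_lgroup[OF assms] by blast
  show "\<forall>G :: 'g lgrp. unital_comm_lgroup G \<and> embeds M G \<longrightarrow> cancellative M \<and> ucdlm M"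
    using embeds_unital_comm_lgroup_imp_cancellative_ucdlm[OF assms] by blast
qed

end
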